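(* Let $0<\alpha<\eta$ with $\alpha\notin\mathbb N$. Let $D\subseteq\mathbb R^d$ be such that for all $x,y\in D$ with $x\ne y$ it holds $y+\sum_{j=1}^d(\rho_j\,d(x,y))^{\mathfrak s_j}\mathbf e_j\in D$ for all $\rho=(\rho_1,\dots,\rho_d)\in\mathbb N^d$. Assume $U$ is a germ over $D$ with $\|U\|_{G^\eta(D)}+[U]_{G^{\eta,\alpha}(D)}<\infty$. Then for all $R>0$, $$\sup_{x\in D}[U_x]_{C^\alpha(D\cap B_R(x))}\lesssim_{\mathfrak s,d,\eta,\alpha}\big(\|U\|_{G^\eta(D)}+[U]_{G^{\eta,\alpha}(D)}\big)R^{\eta-\alpha}.$$
   Context: Fix a scaling $\mathfrak s\in\mathbb N^d$; $\mathbb N=\{1,2,\dots\}$; for $\beta\in\mathbb N_0^d$, $|\beta|:=\sum_i\mathfrak s_i\beta_i$; $d(x,y):=\sum_i|x_i-y_i|^{1/\mathfrak s_i}$, $B_R(x)$ the open ball for $d$, $\mathcal P_k$ the polynomials $\sum_{|\beta|\le k}c_\beta z^\beta$. A germ over $D$ is a family $U=(U_x)_{x\in D}$ of continuous $U_x:D\to\mathbb C$; $\|U\|_{G^\eta(D)}$ is the infimum of $M>0$ with $|U_x(y)|\le M\,d(x,y)^\eta$ for all $x,y\in D$; $[U]_{G^{\eta,\alpha}(D)}$ is the infimum of $M>0$ such that for all $x,y\in D$ there is $P\in\mathcal P_{\lfloor\eta\rfloor}$ with $|(U_x-U_y-P)(z)|\le M\,d(y,z)^\alpha(d(x,y)+d(y,z))^{\eta-\alpha}$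 for all $z\in D$. For $A\subseteq\mathbb R^d$ and a function $f$ on $A$, $[f]_{C^\alpha(A)}$ is the infimum of all $M>0$ such that for every $y\in A$ there is $P\in\mathcal P_{\lfloor\alpha\rfloor}$ with $|f(z)-P(z)|\le M\,d(z,y)^\alpha$ for all $z\in A$. *)

theory Defs
  imports "HOL-Analysis.Analysis"
begin

definition sdist :: "('n::finite \<Rightarrow> nat) \<Rightarrow> real^'n \<Rightarrow> real^'n \<Rightarrow> real" where
  "sdist s x y = (\<Sum>i\<in>UNIV. \<bar>x$i - y$i\<bar> powr (1 / real (s i)))"

definition sball :: "('n::finite \<Rightarrow> nat) \<Rightarrow> real^'n \<Rightarrow> real \<Rightarrow> (real^'n) set" where
  "sball s x R = {y. sdist s x y < R}"

definition sdeg :: "('n::finite \<Rightarrow> nat) \<Rightarrow> ('n \<Rightarrow> nat) \<Rightarrow> nat" where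
  "sdeg s \<beta> = (\<Sum>i\<in>UNIV. s i * \<beta> i)"

definition spolys :: "('n::finite \<Rightarrow> nat) \<Rightarrow> nat \<Rightarrow> (real^'n \<Rightarrow> complex) set" where
  "spolys s k = {p. \<exists>c :: ('n \<Rightarrow> nat) \<Rightarrow> complex.
      p = (\<lambda>z. \<Sum>\<beta>\<in>{\<beta>. sdeg s \<beta> \<le> k}. c \<beta> * (\<Prod>i\<in>UNIV. complex_of_real (z$i) ^ \<beta> i))}"

definition germ :: "(real^'n::finite) set \<Rightarrow> (real^'n \<Rightarrow> real^'n \<Rightarrow> complex) \<Rightarrow> bool" where
  "germ D U \<longleftrightarrow> (\<forall>x\<in>D. continuous_on D (U x))"

text \<open>Infima are taken in the extended reals (infimum of the empty set = infinity).\<close>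
definition germ_norm :: "('n::finite \<Rightarrow> nat) \<Rightarrow> real \<Rightarrow> (real^'n) set
    \<Rightarrow> (real^'n \<Rightarrow> real^'n \<Rightarrow> complex) \<Rightarrow> ereal" where
  "germ_norm s \<eta> D U = Inf {ereal M | M. M > 0 \<and>
      (\<forall>x\<in>D. \<forall>y\<in>D. cmod (U x y) \<le> M * sdist s x y powr \<eta>)}"

definition germ_semi :: "('n::finite \<Rightarrow> nat) \<Rightarrow> real \<Rightarrow> real \<Rightarrow> (real^'n) set
    \<Rightarrow> (real^'n \<Rightarrow> real^'n \<Rightarrow> complex) \<Rightarrow> ereal" where
  "germ_semi s \<eta> \<alpha> D U = Inf {ereal M | M. M > 0 \<and>
      (\<forall>x\<in>D. \<forall>y\<in>D. \<exists>P\<in>spolys s (nat \<lfloor>\<eta>\<rfloor>). \<forall>z\<in>D.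
         cmod (U x z - U y z - P z)
           \<le> M * sdist s y z powr \<alpha> * (sdist s x y + sdist s y z) powr (\<eta> - \<alpha>))}"

definition holder_semi :: "('n::finite \<Rightarrow> nat) \<Rightarrow> real \<Rightarrow> (real^'n \<Rightarrow> complex)
    \<Rightarrow> (real^'n) set \<Rightarrow> ereal" where
  "holder_semi s \<alpha> f A = Inf {ereal M | M. M > 0 \<and>
      (\<forall>y\<in>A. \<exists>P\<in>spolys s (nat \<lfloor>\<alpha>\<rfloor>). \<forall>z\<in>A.
         cmod (f z - P z) \<le> M * sdist s z y powr \<alpha>)}"

definition admissible_domain :: "('n::finite \<Rightarrow> nat) \<Rightarrow> (real^'n) set \<Rightarrow> bool" where
  "admissible_domain s D \<longleftrightarrow> (\<forall>x\<in>D. \<forall>y\<in>D. x \<noteq> y \<longrightarrow>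
      (\<forall>\<rho> :: 'n \<Rightarrow> nat. (\<forall>j. 1 \<le> \<rho> j) \<longrightarrow>
         y + (\<chi> j. (real (\<rho> j) * sdist s x y) ^ s j) \<in> D))"

end

theory Submission
  imports Defs "HOL-Computational_Algebra.Polynomial"
begin

text \<open>
  Fix \<open>x\<close> and \<open>y\<close> in \<open>D\<close> with \<open>\<lambda> = d(x,y) < R\<close>, and expand around \<open>y\<close> the polynomial
  \<open>P\<close> of degree \<open>\<lfloor>\<eta>\<rfloor>\<close> that the germ seminorm provides for the pair \<open>(x,y)\<close>:
  \<open>P z = \<Sum>\<^sub>\<beta> c\<^sub>\<beta> (z - y)\<^sup>\<beta>\<close>. Admissibility of \<open>D\<close> puts the dilated grid points
  \<open>y + \<Sum>\<^sub>j (\<rho>\<^sub>j \<lambda>)^s\<^sub>j e\<^sub>j\<close> with \<open>1 \<le> \<rho>\<^sub>j \<le> \<lfloor>\<eta>\<rfloor> + 1\<close> into \<open>D\<close>, and there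
  \<open>|P| \<le> |U\<^sub>x| + |U\<^sub>y| + |U\<^sub>x - U\<^sub>y - P|\<close> is of order \<open>(N + S) \<lambda>^\<eta>\<close>.
  Tensorised Lagrange interpolation on this grid recovers every coefficient, whence
  \<open>|c\<^sub>\<beta>| \<lambda>^|\<beta>|\<close> is of order \<open>(N + S) \<lambda>^\<eta>\<close>. The truncation \<open>Q\<close> of \<open>P\<close> to degrees
  at most \<open>\<lfloor>\<alpha>\<rfloor>\<close> is the polynomial required at \<open>y\<close>: each term of
  \<open>U\<^sub>x - Q = U\<^sub>y + (U\<^sub>x - U\<^sub>y - P) + (P - Q)\<close> is of order
  \<open>(N + S) R^(\<eta> - \<alpha>) d(y,z)^\<alpha>\<close>, the last one because only degrees
  \<open>\<alpha> < |\<beta>| \<le> \<eta>\<close> survive in \<open>P - Q\<close>.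
\<close>

section \<open>Interpolation on tensor grids\<close>

text \<open>The weights \<open>w r b\<close> form a left inverse of the Vandermonde matrix \<open>(t r ^ c)\<close>: they
  recover the \<open>b\<close>-th coefficient of a polynomial of degree at most \<open>k\<close> from its values at the
  nodes \<open>t r\<close>.\<close>

definition dual_to_powers :: "'i set \<Rightarrow> ('i \<Rightarrow> 'a::comm_ring_1) \<Rightarrow> nat \<Rightarrow> ('i \<Rightarrow> nat \<Rightarrow> 'a) \<Rightarrow> bool"
  where "dual_to_powers I t k w \<longleftrightarrow>
    (\<forall>b\<le>k. \<forall>c\<le>k. (\<Sum>r\<in>I. t r ^ c * w r b) = (if b = c then 1 else 0))"

lemma exists_dual_to_powers:
  fixes t :: "'i \<Rightarrow> 'a::field"
  assumes fin: "finite I" and inj: "inj_on t I" and card: "card I = Suc k"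
  shows "\<exists>w. dual_to_powers I t k w"
proof -
  define L where "L r = (\<Prod>q\<in>I-{r}. smult (1 / (t r - t q)) [:- t q, 1:])" for r
  have degree_L: "degree (L r) \<le> k" if "r \<in> I" for r
  proof -
    have "degree (L r) \<le> sum (degree \<circ> (\<lambda>q. smult (1 / (t r - t q)) [:- t q, 1:])) (I-{r})"
      unfolding L_def by (rule degree_prod_sum_le) (use fin in simp)
    also have "\<dots> \<le> (\<Sum>q\<in>I-{r}. 1)"
      by (intro sum_mono) (auto intro: order.trans[OF degree_smult_le])
    finally show ?thesis using that fin card by simp
  qed
  have poly_L: "poly (L r) (t q) = (if q = r then 1 else 0)" if "r \<in> I" "q \<in> I" for r q
  proof -
    have "poly (L r) (t q) = (\<Prod>q'\<in>I-{r}. (t q - t q') / (t r - t q'))"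
      unfolding L_def poly_prod by (simp add: divide_inverse mult.commute left_diff_distrib)
    also have "\<dots> = (if q = r then 1 else 0)"
    proof (cases "q = r")
      case True
      have "t r \<noteq> t q'" if "q' \<in> I - {r}" for q'
        using inj_onD[OF inj, of r q'] \<open>r \<in> I\<close> that by auto
      then show ?thesis using True by (simp add: prod.neutral)
    qed (use that fin in \<open>auto intro: prod_zero\<close>)
    finally show ?thesis .
  qed
  have monom_eq: "monom 1 c = (\<Sum>r\<in>I. smult (t r ^ c) (L r))" if "c \<le> k" for c
  proof (rule poly_eqI_degree[where A = "t ` I"])
    fix x assume "x \<in> t ` I"
    then obtain q where "q \<in> I" "x = t q" by blast
    then show "poly (monom 1 c) x = poly (\<Sum>r\<in>I. smult (t r ^ c) (L r)) x"
      using fin by (simp add: poly_sum poly_L poly_monom if_distrib sum.delta cong: if_cong)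
  next
    show "degree (monom (1::'a) c) < card (t ` I)"
      using that card card_image[OF inj] by (simp add: degree_monom_eq)
    have "degree (\<Sum>r\<in>I. smult (t r ^ c) (L r)) \<le> k"
      by (intro degree_sum_le fin order.trans[OF degree_smult_le] degree_L)
    then show "degree (\<Sum>r\<in>I. smult (t r ^ c) (L r)) < card (t ` I)"
      using card card_image[OF inj] by simp
  qed
  have "dual_to_powers I t k (\<lambda>r b. coeff (L r) b)"
    unfolding dual_to_powers_def
  proof (intro allI impI)
    fix b c assume "b \<le> k" "c \<le> k"
    from arg_cong[OF monom_eq[OF \<open>c \<le> k\<close>], of "\<lambda>p. coeff p b"]
    show "(\<Sum>r\<in>I. t r ^ c * coeff (L r) b) = (if b = c then 1 else 0)"
      by (simp add: coeff_sum coeff_monom eq_commute)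
  qed
  then show ?thesis by blast
qed

lemma coeff_eq_grid_sum:
  fixes a :: "('n::finite \<Rightarrow> nat) \<Rightarrow> 'a::comm_ring_1"
  assumes dual: "\<And>j. dual_to_powers I (t j) k (w j)" and "finite I"
    and fin: "finite B" and deg: "\<And>\<beta> i. \<beta> \<in> B \<Longrightarrow> \<beta> i \<le> k" and \<gamma>: "\<gamma> \<in> B"
  shows "(\<Sum>\<rho>\<in>PiE UNIV (\<lambda>_. I). (\<Sum>\<beta>\<in>B. a \<beta> * (\<Prod>j\<in>UNIV. t j (\<rho> j) ^ \<beta> j))
            * (\<Prod>j\<in>UNIV. w j (\<rho> j) (\<gamma> j))) = a \<gamma>"
proof -
  have delta: "(\<Sum>r\<in>I. t j r ^ \<beta> j * w j r (\<gamma> j)) = (if \<gamma> j = \<beta> j then 1 else 0)"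
    if "\<beta> \<in> B" for \<beta> j
    using dual[of j] deg[OF \<gamma>] deg[OF that] unfolding dual_to_powers_def by blast
  have "(\<Sum>\<rho>\<in>PiE UNIV (\<lambda>_. I). (\<Sum>\<beta>\<in>B. a \<beta> * (\<Prod>j\<in>UNIV. t j (\<rho> j) ^ \<beta> j))
            * (\<Prod>j\<in>UNIV. w j (\<rho> j) (\<gamma> j)))
      = (\<Sum>\<beta>\<in>B. a \<beta> * (\<Sum>\<rho>\<in>PiE UNIV (\<lambda>_. I). \<Prod>j\<in>UNIV. t j (\<rho> j) ^ \<beta> j * w j (\<rho> j) (\<gamma> j)))"
    by (simp add: sum_distrib_right sum_distrib_left prod.distrib mult.assoc sum.swap[of _ B])
  also have "\<dots> = (\<Sum>\<beta>\<in>B. a \<beta> * (\<Prod>j\<in>UNIV. \<Sum>r\<in>I. t j r ^ \<beta> j * w j r (\<gamma> j)))"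
    by (subst prod_sum_PiE) (auto simp: \<open>finite I\<close>)
  also have "\<dots> = (\<Sum>\<beta>\<in>B. a \<beta> * (if \<beta> = \<gamma> then 1 else 0))"
    by (intro sum.cong refl arg_cong2[where f = times]) (auto simp: delta fun_eq_iff intro!: prod_zero; metis)
  also have "\<dots> = a \<gamma>"
    using fin \<gamma> by (simp add: if_distrib[of "times _"] cong: if_cong)
  finally show ?thesis .
qed

lemma norm_coeff_le_grid_bound:
  fixes a :: "('n::finite \<Rightarrow> nat) \<Rightarrow> 'a::real_normed_field"
  assumes dual: "\<And>j. dual_to_powers I (t j) k (w j)" and "finite I"
    and fin: "finite B" and deg: "\<And>\<beta> i. \<beta> \<in> B \<Longrightarrow> \<beta> i \<le> k" and \<gamma>: "\<gamma> \<in> B"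
    and bound: "\<And>\<rho>. \<rho> \<in> PiE UNIV (\<lambda>_. I) \<Longrightarrow>
      norm (\<Sum>\<beta>\<in>B. a \<beta> * (\<Prod>j\<in>UNIV. t j (\<rho> j) ^ \<beta> j)) \<le> K"
  shows "norm (a \<gamma>) \<le> K * (\<Sum>\<rho>\<in>PiE UNIV (\<lambda>_. I). \<Prod>j\<in>UNIV. norm (w j (\<rho> j) (\<gamma> j)))"
proof -
  have "norm (a \<gamma>) \<le> (\<Sum>\<rho>\<in>PiE UNIV (\<lambda>_. I). norm (\<Sum>\<beta>\<in>B. a \<beta> * (\<Prod>j\<in>UNIV. t j (\<rho> j) ^ \<beta> j))
            * (\<Prod>j\<in>UNIV. norm (w j (\<rho> j) (\<gamma> j))))"
    by (subst coeff_eq_grid_sum[symmetric, where t = t and w = w])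
      (use assms in \<open>auto intro: order.trans[OF norm_sum] simp: norm_mult prod_norm\<close>)
  also have "\<dots> \<le> (\<Sum>\<rho>\<in>PiE UNIV (\<lambda>_. I). K * (\<Prod>j\<in>UNIV. norm (w j (\<rho> j) (\<gamma> j))))"
    by (intro sum_mono mult_right_mono bound prod_nonneg) auto
  finally show ?thesis
    by (simp add: sum_distrib_left)
qed

section \<open>Anisotropic polynomials and distance\<close>

definition smonom :: "('n::finite \<Rightarrow> nat) \<Rightarrow> real^'n \<Rightarrow> complex" where
  "smonom \<beta> z = (\<Prod>i\<in>UNIV. complex_of_real (z$i) ^ \<beta> i)"

lemma spolys_iff:
  "p \<in> spolys s k \<longleftrightarrow> (\<exists>c. p = (\<lambda>z. \<Sum>\<beta>\<in>{\<beta>. sdeg s \<beta> \<le> k}. c \<beta> * smonom \<beta> z))"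
  unfolding spolys_def smonom_def by simp

lemma le_sdeg: "1 \<le> s i \<Longrightarrow> \<beta> i \<le> sdeg s \<beta>"
  unfolding sdeg_def
  by (rule order.trans[OF _ member_le_sum[of i]]) auto

lemma finite_sdeg_le:
  assumes "\<forall>i. 1 \<le> s i"
  shows "finite {\<beta>::'n::finite \<Rightarrow> nat. sdeg s \<beta> \<le> k}"
proof (rule finite_subset)
  show "{\<beta>. sdeg s \<beta> \<le> k} \<subseteq> PiE UNIV (\<lambda>_. {..k})"
    using le_sdeg assms by (fastforce simp: PiE_def Pi_def intro: order.trans)
qed (simp add: finite_PiE)

lemma spolys_zero: "(\<lambda>z. 0) \<in> spolys s k"
  unfolding spolys_iff by (intro exI[of _ "\<lambda>\<beta>. 0"]) simp

lemma spolys_add: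
  assumes "p \<in> spolys s k" and "q \<in> spolys s k"
  shows "(\<lambda>z. p z + q z) \<in> spolys s k"
proof -
  obtain c d where "p = (\<lambda>z. \<Sum>\<beta>\<in>{\<beta>. sdeg s \<beta> \<le> k}. c \<beta> * smonom \<beta> z)"
    and "q = (\<lambda>z. \<Sum>\<beta>\<in>{\<beta>. sdeg s \<beta> \<le> k}. d \<beta> * smonom \<beta> z)"
    using assms unfolding spolys_iff by blast
  then show ?thesis
    unfolding spolys_iff by (auto simp: sum.distrib distrib_right intro!: exI[of _ "\<lambda>\<beta>. c \<beta> + d \<beta>"])
qed

lemma spolys_cmult:
  assumes "p \<in> spolys s k"
  shows "(\<lambda>z. a * p z) \<in> spolys s k"
proof -
  obtain c where "p = (\<lambda>z. \<Sum>\<beta>\<in>{\<beta>. sdeg s \<beta> \<le> k}. c \<beta> * smonom \<beta> z)"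
    using assms unfolding spolys_iff by blast
  then show ?thesis
    unfolding spolys_iff by (auto simp: sum_distrib_left mult.assoc intro!: exI[of _ "\<lambda>\<beta>. a * c \<beta>"])
qed

lemma spolys_sum:
  "finite A \<Longrightarrow> (\<And>a. a \<in> A \<Longrightarrow> f a \<in> spolys s k) \<Longrightarrow> (\<lambda>z. \<Sum>a\<in>A. f a z) \<in> spolys s k"
  by (induction A rule: finite_induct) (simp_all add: spolys_zero spolys_add)

lemma smonom_in_spolys:
  assumes "\<forall>i. 1 \<le> s i" and "sdeg s \<beta> \<le> k"
  shows "smonom \<beta> \<in> spolys s k"
  unfolding spolys_iff
proof (intro exI[of _ "\<lambda>\<gamma>. if \<gamma> = \<beta> then 1 else 0"] ext)
  show "smonom \<beta> z = (\<Sum>\<gamma>\<in>{\<beta>. sdeg s \<beta> \<le> k}. (if \<gamma> = \<beta> then 1 else 0) * smonom \<gamma> z)" for z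
    using assms finite_sdeg_le[OF assms(1)] by (simp add: if_distrib[of "\<lambda>x. x * _"] cong: if_cong)
qed

lemma smonom_translate:
  "smonom \<beta> (z + v) = (\<Sum>\<gamma>\<in>PiE UNIV (\<lambda>i. {..\<beta> i}).
      (\<Prod>i\<in>UNIV. of_nat (\<beta> i choose \<gamma> i) * complex_of_real (v$i) ^ (\<beta> i - \<gamma> i)) * smonom \<gamma> z)"
proof -
  have "smonom \<beta> (z + v) = (\<Prod>i\<in>UNIV. \<Sum>g\<le>\<beta> i.
      (of_nat (\<beta> i choose g) * complex_of_real (v$i) ^ (\<beta> i - g)) * complex_of_real (z$i) ^ g)"
    unfolding smonom_def by (simp add: binomial_ring mult_ac)
  also have "\<dots> = (\<Sum>\<gamma>\<in>PiE UNIV (\<lambda>i. {..\<beta> i}). \<Prod>i\<in>UNIV.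
      (of_nat (\<beta> i choose \<gamma> i) * complex_of_real (v$i) ^ (\<beta> i - \<gamma> i)) * complex_of_real (z$i) ^ \<gamma> i)"
    by (rule prod_sum_PiE) auto
  finally show ?thesis
    unfolding smonom_def by (simp add: prod.distrib)
qed

lemma spolys_translate:
  assumes s: "\<forall>i. 1 \<le> s i" and p: "p \<in> spolys s k"
  shows "(\<lambda>z. p (z + v)) \<in> spolys s k"
proof -
  have "(\<lambda>z. smonom \<beta> (z + v)) \<in> spolys s k" if "sdeg s \<beta> \<le> k" for \<beta>
    unfolding smonom_translate
  proof (intro spolys_sum spolys_cmult smonom_in_spolys[OF s])
    fix \<gamma> assume "\<gamma> \<in> PiE UNIV (\<lambda>i. {..\<beta> i})"
    then have "sdeg s \<gamma> \<le> sdeg s \<beta>"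
      unfolding sdeg_def by (intro sum_mono) (auto simp: PiE_def Pi_def)
    then show "sdeg s \<gamma> \<le> k" using that by simp
  qed (simp add: finite_PiE)
  moreover obtain c where "p = (\<lambda>z. \<Sum>\<beta>\<in>{\<beta>. sdeg s \<beta> \<le> k}. c \<beta> * smonom \<beta> z)"
    using p unfolding spolys_iff by blast
  ultimately show ?thesis
    using finite_sdeg_le[OF s] by (auto intro!: spolys_sum spolys_cmult)
qed

lemma spolys_centered:
  assumes "\<forall>i. 1 \<le> s i"
  shows "(\<lambda>z. \<Sum>\<beta>\<in>{\<beta>. sdeg s \<beta> \<le> k}. c \<beta> * smonom \<beta> (z - y)) \<in> spolys s k"
  using spolys_translate[OF assms, of "\<lambda>z. \<Sum>\<beta>\<in>{\<beta>. sdeg s \<beta> \<le> k}. c \<beta> * smonom \<beta> z" k "- y"]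
  unfolding spolys_iff by auto

lemma spolys_expand_at:
  assumes "\<forall>i. 1 \<le> s i" and "p \<in> spolys s k"
  obtains c where "\<And>z. p z = (\<Sum>\<beta>\<in>{\<beta>. sdeg s \<beta> \<le> k}. c \<beta> * smonom \<beta> (z - y))"
  using spolys_translate[OF assms, of y] unfolding spolys_iff
  by (metis diff_add_cancel)

lemma norm_smonom_le:
  assumes "0 \<le> \<delta>" and "\<forall>i. \<bar>w$i\<bar> \<le> \<delta> ^ s i"
  shows "cmod (smonom \<beta> w) \<le> \<delta> ^ sdeg s \<beta>"
proof -
  have "cmod (smonom \<beta> w) = (\<Prod>i\<in>UNIV. \<bar>w$i\<bar> ^ \<beta> i)"
    unfolding smonom_def prod_norm[symmetric] by (simp add: norm_power)
  also have "\<dots> \<le> (\<Prod>i\<in>UNIV. (\<delta> ^ s i) ^ \<beta> i)"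
    using assms by (intro prod_mono conjI power_mono) auto
  also have "\<dots> = \<delta> ^ sdeg s \<beta>"
    unfolding sdeg_def by (simp add: power_sum power_mult)
  finally show ?thesis .
qed

lemma smonom_dilate:
  "smonom \<beta> (\<chi> j. (t j * h) ^ s j) = complex_of_real (h ^ sdeg s \<beta>) * smonom \<beta> (\<chi> j. t j ^ s j)"
  unfolding smonom_def sdeg_def
  by (simp add: power_sum power_mult_distrib prod.distrib power_mult[symmetric] mult.commute)

lemma power_add_le_power_sum:
  fixes u v :: real
  assumes "0 \<le> u" and "0 \<le> v" and "0 < n"
  shows "u ^ n + v ^ n \<le> (u + v) ^ n"
  using \<open>0 < n\<close>
proof (induction n rule: nat_induct_non_zero)
  case (Suc n)
  have "u ^ Suc n + v ^ Suc n \<le> (u + v) * (u ^ n + v ^ n)"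
    using assms by (simp add: algebra_simps)
  also have "\<dots> \<le> (u + v) * (u + v) ^ n"
    using Suc.IH assms by (intro mult_left_mono) auto
  finally show ?case by simp
qed simp

lemma root_abs_add_le:
  assumes "0 < n"
  shows "root n \<bar>a + b\<bar> \<le> root n \<bar>a\<bar> + root n \<bar>b\<bar>"
proof -
  define u v where "u = root n \<bar>a\<bar>" and "v = root n \<bar>b\<bar>"
  have uv: "0 \<le> u" "0 \<le> v"
    by (simp_all add: u_def v_def real_root_ge_zero)
  have "\<bar>a + b\<bar> \<le> u ^ n + v ^ n"
    using assms abs_triangle_ineq by (simp add: u_def v_def)
  also have "\<dots> \<le> (u + v) ^ n"
    using uv assms by (rule power_add_le_power_sum)
  finally have "root n \<bar>a + b\<bar> \<le> root n ((u + v) ^ n)"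
    using assms by simp
  also have "\<dots> = u + v"
    using assms uv by (simp add: real_root_power_cancel)
  finally show ?thesis
    by (simp add: u_def v_def)
qed

lemma sdist_eq_sum_root:
  assumes "\<forall>i. 1 \<le> s i"
  shows "sdist s x y = (\<Sum>i\<in>UNIV. root (s i) \<bar>x$i - y$i\<bar>)"
  unfolding sdist_def using assms by (intro sum.cong refl) (simp add: root_powr_inverse Suc_le_eq)

lemma sdist_sym: "sdist s x y = sdist s y x"
  unfolding sdist_def by (simp add: abs_minus_commute)

lemma sdist_nonneg: "0 \<le> sdist s x y"
  unfolding sdist_def by (intro sum_nonneg) auto

lemma sdist_pos:
  assumes "x \<noteq> y"
  shows "0 < sdist s x y"
proof -
  obtain i where "x$i \<noteq> y$i"
    using assms by (auto simp: vec_eq_iff)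
  then have "0 < \<bar>x$i - y$i\<bar> powr (1 / real (s i))"
    by simp
  also have "\<dots> \<le> sdist s x y"
    unfolding sdist_def by (rule member_le_sum) auto
  finally show ?thesis .
qed

lemma sdist_triangle:
  assumes "\<forall>i. 1 \<le> s i"
  shows "sdist s x z \<le> sdist s x y + sdist s y z"
  unfolding sdist_eq_sum_root[OF assms] sum.distrib[symmetric]
proof (rule sum_mono)
  fix i
  have "0 < s i" using assms by (simp add: Suc_le_eq)
  then show "root (s i) \<bar>x$i - z$i\<bar> \<le> root (s i) \<bar>x$i - y$i\<bar> + root (s i) \<bar>y$i - z$i\<bar>"
    using root_abs_add_le[of "s i" "x$i - y$i" "y$i - z$i"] by simp
qed

lemma abs_component_le_sdist_power:
  assumes "1 \<le> s i"
  shows "\<bar>x$i - y$i\<bar> \<le> sdist s x y ^ s i"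
proof -
  have "root (s i) \<bar>x$i - y$i\<bar> \<le> sdist s x y"
    using assms member_le_sum[of i UNIV "\<lambda>i. \<bar>x$i - y$i\<bar> powr (1 / real (s i))"]
    unfolding sdist_def by (simp add: root_powr_inverse)
  then have "root (s i) \<bar>x$i - y$i\<bar> ^ s i \<le> sdist s x y ^ s i"
    by (intro power_mono) (simp_all add: real_root_ge_zero)
  then show ?thesis
    using assms by simp
qed

lemma sdist_add_dilation:
  assumes "\<forall>i. 1 \<le> s i" and "\<forall>j. 0 \<le> t j" and "0 \<le> h"
  shows "sdist s y (y + (\<chi> j. (t j * h) ^ s j)) = (\<Sum>j\<in>UNIV. t j) * h"
  unfolding sdist_eq_sum_root[OF assms(1)] sum_distrib_right
  using assms by (intro sum.cong refl) (simp add: real_root_power_cancel Suc_le_eq)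

section \<open>Coefficient bounds on dilated grids\<close>

definition interp_grid :: "nat \<Rightarrow> ('n::finite \<Rightarrow> nat) set" where
  "interp_grid k = PiE UNIV (\<lambda>_. {1..k+1})"

definition interp_weights :: "('n::finite \<Rightarrow> nat) \<Rightarrow> nat \<Rightarrow> 'n \<Rightarrow> nat \<Rightarrow> nat \<Rightarrow> complex" where
  "interp_weights s k j =
    (SOME w. dual_to_powers {1..k+1} (\<lambda>r. complex_of_real (real r ^ s j)) k w)"

definition interp_const :: "('n::finite \<Rightarrow> nat) \<Rightarrow> nat \<Rightarrow> real" where
  "interp_const s k = (\<Sum>\<gamma>\<in>{\<beta>. sdeg s \<beta> \<le> k}. \<Sum>\<rho>\<in>interp_grid k.
     \<Prod>j\<in>UNIV. cmod (interp_weights s k j (\<rho> j) (\<gamma> j)))"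

lemma dual_interp_weights:
  assumes "1 \<le> s j"
  shows "dual_to_powers {1..k+1} (\<lambda>r. complex_of_real (real r ^ s j)) k (interp_weights s k j)"
proof -
  have "inj_on (\<lambda>r. complex_of_real (real r ^ s j)) {1..k+1}"
    using assms by (intro inj_onI) (simp flip: of_nat_power add: power_eq_iff_eq_base Suc_le_eq)
  then have "\<exists>w. dual_to_powers {1..k+1} (\<lambda>r. complex_of_real (real r ^ s j)) k w"
    by (intro exists_dual_to_powers) simp_all
  then show ?thesis
    unfolding interp_weights_def by (rule someI_ex)
qed

lemma interp_const_nonneg: "0 \<le> interp_const s k"
  unfolding interp_const_def by (intro sum_nonneg prod_nonneg) auto

lemma scaled_coeff_bound:
  fixes s :: "'n::finite \<Rightarrow> nat"
  assumes s: "\<forall>i. 1 \<le> s i" and "0 < h" and \<gamma>: "sdeg s \<gamma> \<le> k"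
    and bound: "\<And>\<rho>. \<rho> \<in> interp_grid k \<Longrightarrow>
      cmod (\<Sum>\<beta>\<in>{\<beta>. sdeg s \<beta> \<le> k}. c \<beta> * smonom \<beta> (\<chi> j. (real (\<rho> j) * h) ^ s j)) \<le> K"
  shows "cmod (c \<gamma>) * h ^ sdeg s \<gamma> \<le> K * interp_const s k"
proof -
  let ?B = "{\<beta>. sdeg s \<beta> \<le> k}"
  have "cmod (c \<gamma> * complex_of_real (h ^ sdeg s \<gamma>))
      \<le> K * (\<Sum>\<rho>\<in>interp_grid k. \<Prod>j\<in>UNIV. cmod (interp_weights s k j (\<rho> j) (\<gamma> j)))"
    unfolding interp_grid_def
  proof (rule norm_coeff_le_grid_bound[where t = "\<lambda>j r. complex_of_real (real r ^ s j)"])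
    show "dual_to_powers {1..k+1} (\<lambda>r. complex_of_real (real r ^ s j)) k (interp_weights s k j)" for j :: 'n
      using s by (intro dual_interp_weights) auto
    show "finite ?B"
      using s by (rule finite_sdeg_le)
    show "\<beta> i \<le> k" if "\<beta> \<in> ?B" for \<beta> i
      using le_sdeg[of s i \<beta>] s that by auto
    show "\<gamma> \<in> ?B"
      using \<gamma> by simp
    fix \<rho> :: "'n \<Rightarrow> nat" assume "\<rho> \<in> UNIV \<rightarrow>\<^sub>E {1..k+1}"
    then show "cmod (\<Sum>\<beta>\<in>?B. c \<beta> * complex_of_real (h ^ sdeg s \<beta>)
        * (\<Prod>j\<in>UNIV. complex_of_real (real (\<rho> j) ^ s j) ^ \<beta> j)) \<le> K"
      using bound[of \<rho>] by (simp add: interp_grid_def smonom_dilate mult.assoc, simp add: smonom_def)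
  qed simp
  also have "\<dots> \<le> K * interp_const s k"
  proof (rule mult_left_mono)
    show "0 \<le> K"
      using bound[of "\<lambda>_. 1"] by (rule order.trans[OF norm_ge_zero]) (simp add: interp_grid_def PiE_iff)
    show "(\<Sum>\<rho>\<in>interp_grid k. \<Prod>j\<in>UNIV. cmod (interp_weights s k j (\<rho> j) (\<gamma> j))) \<le> interp_const s k"
      unfolding interp_const_def using \<gamma> finite_sdeg_le[OF s]
      by (intro member_le_sum[where f = "\<lambda>\<gamma>. \<Sum>\<rho>\<in>interp_grid k. \<Prod>j\<in>UNIV. cmod (interp_weights s k j (\<rho> j) (\<gamma> j))"])
        (auto intro!: sum_nonneg prod_nonneg)
  qed
  finally show ?thesis
    using \<open>0 < h\<close> by (simp add: norm_mult norm_power)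
qed

lemma powr_mult_power_le:
  fixes h T \<delta> \<alpha> \<eta> :: real and b :: nat
  assumes "0 < h" "h \<le> T" "0 \<le> \<delta>" "\<delta> \<le> T" "0 \<le> \<alpha>" "\<alpha> < b" "b \<le> \<eta>"
  shows "h powr (\<eta> - b) * \<delta> ^ b \<le> T powr (\<eta> - \<alpha>) * \<delta> powr \<alpha>"
proof (cases "\<delta> = 0")
  case True
  have "b \<noteq> 0" using assms by auto
  then show ?thesis using True by (simp add: zero_power)
next
  case False
  then have "0 < \<delta>" using assms by simp
  then have "h powr (\<eta> - b) * \<delta> ^ b = (h powr (\<eta> - b) * \<delta> powr (b - \<alpha>)) * \<delta> powr \<alpha>"
    by (simp add: powr_realpow[symmetric] mult.assoc powr_add[symmetric])
  also have "\<dots> \<le> (T powr (\<eta> - b) * T powr (b - \<alpha>)) * \<delta> powr \<alpha>"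
    using assms by (intro mult_right_mono mult_mono powr_mono2) auto
  also have "\<dots> = T powr (\<eta> - \<alpha>) * \<delta> powr \<alpha>"
    by (simp add: powr_add[symmetric])
  finally show ?thesis .
qed

lemma norm_mult_smonom_le:
  fixes h T \<delta> \<alpha> \<eta> A :: real
  assumes "0 < h" "h \<le> T" "0 \<le> \<delta>" "\<delta> \<le> T" "0 \<le> \<alpha>" "\<alpha> < sdeg s \<beta>" "sdeg s \<beta> \<le> \<eta>"
    and coeff: "cmod c * h ^ sdeg s \<beta> \<le> A * h powr \<eta>"
    and w: "\<forall>i. \<bar>w$i\<bar> \<le> \<delta> ^ s i"
  shows "cmod (c * smonom \<beta> w) \<le> A * T powr (\<eta> - \<alpha>) * \<delta> powr \<alpha>"
proof -
  have "0 \<le> A * h powr \<eta>"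
    by (rule order.trans[OF _ coeff]) (use \<open>0 < h\<close> in simp)
  then have "0 \<le> A"
    using \<open>0 < h\<close> by (simp add: zero_le_mult_iff)
  have "cmod c \<le> A * h powr (\<eta> - sdeg s \<beta>)"
    using coeff \<open>0 < h\<close> by (simp add: powr_diff powr_realpow pos_le_divide_eq)
  then have "cmod (c * smonom \<beta> w) \<le> A * h powr (\<eta> - sdeg s \<beta>) * \<delta> ^ sdeg s \<beta>"
    unfolding norm_mult using norm_smonom_le[OF \<open>0 \<le> \<delta>\<close> w, of \<beta>] \<open>0 \<le> A\<close>
    by (intro mult_mono) auto
  also have "\<dots> \<le> A * (T powr (\<eta> - \<alpha>) * \<delta> powr \<alpha>)"
    unfolding mult.assoc using assms \<open>0 \<le> A\<close>
    by (intro mult_left_mono powr_mult_power_le) auto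
  finally show ?thesis
    by (simp add: mult.assoc)
qed

lemma norm_sum_smonom_le:
  fixes h T \<delta> \<alpha> \<eta> A :: real
  assumes "0 < h" "h \<le> T" "0 \<le> \<delta>" "\<delta> \<le> T" "0 \<le> \<alpha>"
    and deg: "\<And>\<beta>. \<beta> \<in> B \<Longrightarrow> \<alpha> < sdeg s \<beta> \<and> sdeg s \<beta> \<le> \<eta>"
    and coeff: "\<And>\<beta>. \<beta> \<in> B \<Longrightarrow> cmod (c \<beta>) * h ^ sdeg s \<beta> \<le> A * h powr \<eta>"
    and w: "\<forall>i. \<bar>w$i\<bar> \<le> \<delta> ^ s i"
  shows "cmod (\<Sum>\<beta>\<in>B. c \<beta> * smonom \<beta> w) \<le> real (card B) * (A * T powr (\<eta> - \<alpha>) * \<delta> powr \<alpha>)"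
proof -
  have "cmod (\<Sum>\<beta>\<in>B. c \<beta> * smonom \<beta> w) \<le> (\<Sum>\<beta>\<in>B. cmod (c \<beta> * smonom \<beta> w))"
    by (rule norm_sum)
  also have "\<dots> \<le> (\<Sum>\<beta>\<in>B. A * T powr (\<eta> - \<alpha>) * \<delta> powr \<alpha>)"
    using assms deg coeff by (intro sum_mono norm_mult_smonom_le[where h = h]) auto
  finally show ?thesis
    by simp
qed

section \<open>Taylor truncation of germs\<close>

definition germ_norm_bound ::
    "('n::finite \<Rightarrow> nat) \<Rightarrow> real \<Rightarrow> (real^'n) set \<Rightarrow> (real^'n \<Rightarrow> real^'n \<Rightarrow> complex) \<Rightarrow> real \<Rightarrow> bool"
  where "germ_norm_bound s \<eta> D U M \<longleftrightarrow> (\<forall>x\<in>D. \<forall>y\<in>D. cmod (U x y) \<le> M * sdist s x y powr \<eta>)"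

definition germ_semi_bound :: "('n::finite \<Rightarrow> nat) \<Rightarrow> real \<Rightarrow> real \<Rightarrow> (real^'n) set
    \<Rightarrow> (real^'n \<Rightarrow> real^'n \<Rightarrow> complex) \<Rightarrow> real \<Rightarrow> bool"
  where "germ_semi_bound s \<eta> \<alpha> D U M \<longleftrightarrow> (\<forall>x\<in>D. \<forall>y\<in>D. \<exists>P\<in>spolys s (nat \<lfloor>\<eta>\<rfloor>). \<forall>z\<in>D.
    cmod (U x z - U y z - P z) \<le> M * sdist s y z powr \<alpha> * (sdist s x y + sdist s y z) powr (\<eta> - \<alpha>))"

definition holder_semi_bound ::
    "('n::finite \<Rightarrow> nat) \<Rightarrow> real \<Rightarrow> (real^'n \<Rightarrow> complex) \<Rightarrow> (real^'n) set \<Rightarrow> real \<Rightarrow> bool"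
  where "holder_semi_bound s \<alpha> f A M \<longleftrightarrow>
    (\<forall>y\<in>A. \<exists>P\<in>spolys s (nat \<lfloor>\<alpha>\<rfloor>). \<forall>z\<in>A. cmod (f z - P z) \<le> M * sdist s z y powr \<alpha>)"

lemma germ_norm_eq_Inf: "germ_norm s \<eta> D U = Inf {ereal M | M. M > 0 \<and> germ_norm_bound s \<eta> D U M}"
  unfolding germ_norm_def germ_norm_bound_def ..

lemma germ_semi_eq_Inf: "germ_semi s \<eta> \<alpha> D U = Inf {ereal M | M. M > 0 \<and> germ_semi_bound s \<eta> \<alpha> D U M}"
  unfolding germ_semi_def germ_semi_bound_def ..

lemma holder_semi_eq_Inf: "holder_semi s \<alpha> f A = Inf {ereal M | M. M > 0 \<and> holder_semi_bound s \<alpha> f A M}"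
  unfolding holder_semi_def holder_semi_bound_def ..

lemma norm_germ_le_powr:
  fixes \<alpha> \<eta> :: real
  assumes "germ_norm_bound s \<eta> D U N" "0 \<le> N" "x \<in> D" "z \<in> D" "0 \<le> \<alpha>" "\<alpha> \<le> \<eta>"
    and "sdist s x z \<le> T"
  shows "cmod (U x z) \<le> N * T powr (\<eta> - \<alpha>) * sdist s x z powr \<alpha>"
proof -
  have "cmod (U x z) \<le> N * (sdist s x z powr (\<eta> - \<alpha>) * sdist s x z powr \<alpha>)"
    using assms unfolding germ_norm_bound_def by (simp add: powr_add[symmetric])
  also have "\<dots> \<le> N * (T powr (\<eta> - \<alpha>) * sdist s x z powr \<alpha>)"
    using assms by (intro mult_left_mono mult_right_mono powr_mono2) (auto simp: sdist_nonneg)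
  finally show ?thesis
    by (simp add: mult.assoc)
qed

lemma norm_germ_jet_le:
  fixes \<alpha> \<eta> :: real
  assumes s: "\<forall>i. 1 \<le> s i" and "0 \<le> \<alpha>" "\<alpha> \<le> \<eta>"
    and N: "germ_norm_bound s \<eta> D U N" "0 \<le> N" and "0 \<le> S" and D: "x \<in> D" "y \<in> D" "z \<in> D"
    and P: "cmod (U x z - U y z - P z)
      \<le> S * sdist s y z powr \<alpha> * (sdist s x y + sdist s y z) powr (\<eta> - \<alpha>)"
  shows "cmod (P z) \<le> (2 * N + S) * (sdist s x y + sdist s y z) powr \<eta>"
proof -
  define T where "T = sdist s x y + sdist s y z"
  have "sdist s x z \<le> T" "sdist s y z \<le> T" "0 \<le> sdist s y z"
    using sdist_triangle[OF s, of x z y] by (simp_all add: T_def sdist_nonneg)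
  have U_le: "cmod (U a z) \<le> N * T powr \<eta>" if "a \<in> D" "sdist s a z \<le> T" for a
  proof -
    have "cmod (U a z) \<le> N * sdist s a z powr \<eta>"
      using N(1) that D unfolding germ_norm_bound_def by blast
    also have "\<dots> \<le> N * T powr \<eta>"
      using that N(2) \<open>0 \<le> \<alpha>\<close> \<open>\<alpha> \<le> \<eta>\<close> by (intro mult_left_mono powr_mono2) (auto simp: sdist_nonneg)
    finally show ?thesis .
  qed
  have "cmod (U x z) \<le> N * T powr \<eta>" "cmod (U y z) \<le> N * T powr \<eta>"
    using U_le D \<open>sdist s x z \<le> T\<close> \<open>sdist s y z \<le> T\<close> by auto
  moreover have "cmod (U x z - U y z - P z) \<le> S * T powr \<eta>"
  proof -
    have "sdist s y z powr \<alpha> \<le> T powr \<alpha>"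
      using \<open>sdist s y z \<le> T\<close> \<open>0 \<le> sdist s y z\<close> \<open>0 \<le> \<alpha>\<close> by (intro powr_mono2)
    then have "S * sdist s y z powr \<alpha> * T powr (\<eta> - \<alpha>) \<le> S * T powr \<alpha> * T powr (\<eta> - \<alpha>)"
      using \<open>0 \<le> S\<close> by (intro mult_left_mono mult_right_mono) auto
    then show ?thesis
      using P unfolding T_def[symmetric] by (simp add: mult.assoc powr_add[symmetric])
  qed
  moreover have "cmod (P z) \<le> cmod (U x z) + cmod (U y z) + cmod (U x z - U y z - P z)"
    by (rule order.trans[OF _ add_mono[OF norm_triangle_ineq4 order.refl]])
      (rule order.trans[OF _ norm_triangle_ineq4], simp)
  ultimately show ?thesis
    unfolding T_def[symmetric] by (simp add: algebra_simps)
qed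

definition grid_coeff_const :: "('n::finite \<Rightarrow> nat) \<Rightarrow> real \<Rightarrow> nat \<Rightarrow> real" where
  "grid_coeff_const s \<eta> k = (1 + real (CARD('n) * (k + 1))) powr \<eta> * interp_const s k"

lemma grid_coeff_const_nonneg: "0 \<le> grid_coeff_const s \<eta> k"
  unfolding grid_coeff_const_def by (intro mult_nonneg_nonneg interp_const_nonneg) simp

lemma taylor_coeff_bound:
  fixes s :: "'n::finite \<Rightarrow> nat" and \<alpha> \<eta> :: real
  assumes s: "\<forall>i. 1 \<le> s i" and "0 \<le> \<alpha>" "\<alpha> \<le> \<eta>" and adm: "admissible_domain s D"
    and N: "germ_norm_bound s \<eta> D U N" "0 \<le> N" and "0 \<le> S"
    and D: "x \<in> D" "y \<in> D" "x \<noteq> y"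
    and jet: "\<forall>z\<in>D. cmod (U x z - U y z - P z)
      \<le> S * sdist s y z powr \<alpha> * (sdist s x y + sdist s y z) powr (\<eta> - \<alpha>)"
    and c: "\<And>z. P z = (\<Sum>\<beta>\<in>{\<beta>. sdeg s \<beta> \<le> k}. c \<beta> * smonom \<beta> (z - y))"
    and \<gamma>: "sdeg s \<gamma> \<le> k"
  shows "cmod (c \<gamma>) * sdist s x y ^ sdeg s \<gamma> \<le> (2 * N + S) * grid_coeff_const s \<eta> k * sdist s x y powr \<eta>"
proof -
  define h where "h = sdist s x y"
  define m where "m = 1 + real (CARD('n) * (k + 1))"
  have "0 < h"
    using D sdist_pos unfolding h_def by blast
  have "cmod (c \<gamma>) * h ^ sdeg s \<gamma> \<le> (2 * N + S) * (m * h) powr \<eta> * interp_const s k"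
  proof (rule scaled_coeff_bound[OF s \<open>0 < h\<close> \<gamma>])
    fix \<rho> :: "'n \<Rightarrow> nat" assume \<rho>: "\<rho> \<in> interp_grid k"
    then have \<rho>_bounds: "1 \<le> \<rho> j" "\<rho> j \<le> k + 1" for j
      by (auto simp: interp_grid_def PiE_iff)
    define z where "z = y + (\<chi> j. (real (\<rho> j) * h) ^ s j)"
    have "z \<in> D"
      using adm D \<rho>_bounds unfolding admissible_domain_def z_def h_def by blast
    have "sdist s y z = (\<Sum>j\<in>UNIV. real (\<rho> j)) * h"
      unfolding z_def using sdist_add_dilation[OF s] \<open>0 < h\<close> by simp
    also have "\<dots> \<le> (\<Sum>j\<in>(UNIV::'n set). real (k + 1)) * h"
      using of_nat_mono[OF \<rho>_bounds(2)] \<open>0 < h\<close> by (intro mult_right_mono sum_mono) simp_all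
    finally have "h + sdist s y z \<le> m * h"
      by (simp add: m_def algebra_simps)
    have "cmod (\<Sum>\<beta>\<in>{\<beta>. sdeg s \<beta> \<le> k}. c \<beta> * smonom \<beta> (\<chi> j. (real (\<rho> j) * h) ^ s j)) = cmod (P z)"
      by (simp add: c z_def)
    also have "\<dots> \<le> (2 * N + S) * (h + sdist s y z) powr \<eta>"
      using norm_germ_jet_le[OF s \<open>0 \<le> \<alpha>\<close> \<open>\<alpha> \<le> \<eta>\<close> N \<open>0 \<le> S\<close> D(1,2) \<open>z \<in> D\<close>] jet \<open>z \<in> D\<close>
      unfolding h_def by blast
    also have "\<dots> \<le> (2 * N + S) * (m * h) powr \<eta>"
      using \<open>h + sdist s y z \<le> m * h\<close> \<open>0 < h\<close> assms
      by (intro mult_left_mono powr_mono2) (auto simp: sdist_nonneg)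
    finally show "cmod (\<Sum>\<beta>\<in>{\<beta>. sdeg s \<beta> \<le> k}. c \<beta> * smonom \<beta> (\<chi> j. (real (\<rho> j) * h) ^ s j))
      \<le> (2 * N + S) * (m * h) powr \<eta>" .
  qed
  then show ?thesis
    using \<open>0 < h\<close> by (simp add: powr_mult h_def m_def grid_coeff_const_def mult_ac)
qed

lemma norm_taylor_remainder_le:
  fixes s :: "'n::finite \<Rightarrow> nat" and \<alpha> \<eta> :: real
  assumes s: "\<forall>i. 1 \<le> s i" and "0 < \<alpha>" "\<alpha> < \<eta>" and adm: "admissible_domain s D"
    and N: "germ_norm_bound s \<eta> D U N" "0 \<le> N" and "0 \<le> S"
    and D: "x \<in> D" "y \<in> D" "x \<noteq> y"
    and jet: "\<forall>z\<in>D. cmod (U x z - U y z - P z)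
      \<le> S * sdist s y z powr \<alpha> * (sdist s x y + sdist s y z) powr (\<eta> - \<alpha>)"
    and c: "\<And>z. P z = (\<Sum>\<beta>\<in>{\<beta>. sdeg s \<beta> \<le> nat \<lfloor>\<eta>\<rfloor>}. c \<beta> * smonom \<beta> (z - y))"
    and "sdist s x y \<le> T" "sdist s y z \<le> T"
  shows "cmod (\<Sum>\<beta>\<in>{\<beta>. sdeg s \<beta> \<le> nat \<lfloor>\<eta>\<rfloor>} - {\<beta>. sdeg s \<beta> \<le> nat \<lfloor>\<alpha>\<rfloor>}. c \<beta> * smonom \<beta> (z - y))
    \<le> real (card {\<beta>. sdeg s \<beta> \<le> nat \<lfloor>\<eta>\<rfloor>}) * ((2 * N + S) * grid_coeff_const s \<eta> (nat \<lfloor>\<eta>\<rfloor>)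
         * T powr (\<eta> - \<alpha>) * sdist s y z powr \<alpha>)"
    (is "cmod (\<Sum>\<beta>\<in>?B - ?B\<^sub>\<alpha>. _) \<le> _ * (?A * _ * _)")
proof -
  have "0 \<le> ?A"
    using N(2) \<open>0 \<le> S\<close> by (intro mult_nonneg_nonneg grid_coeff_const_nonneg) simp
  have "cmod (\<Sum>\<beta>\<in>?B - ?B\<^sub>\<alpha>. c \<beta> * smonom \<beta> (z - y))
      \<le> real (card (?B - ?B\<^sub>\<alpha>)) * (?A * T powr (\<eta> - \<alpha>) * sdist s y z powr \<alpha>)"
  proof (rule norm_sum_smonom_le[where h = "sdist s x y"])
    show "\<alpha> < sdeg s \<beta> \<and> sdeg s \<beta> \<le> \<eta>" if "\<beta> \<in> ?B - ?B\<^sub>\<alpha>" for \<beta>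
    proof -
      have "\<lfloor>\<alpha>\<rfloor> < int (sdeg s \<beta>)" "int (sdeg s \<beta>) \<le> \<lfloor>\<eta>\<rfloor>"
        using that \<open>0 < \<alpha>\<close> \<open>\<alpha> < \<eta>\<close> by auto
      then show ?thesis
        by (simp add: floor_less_iff le_floor_iff)
    qed
    show "cmod (c \<beta>) * sdist s x y ^ sdeg s \<beta> \<le> ?A * sdist s x y powr \<eta>" if "\<beta> \<in> ?B - ?B\<^sub>\<alpha>" for \<beta>
      using taylor_coeff_bound[OF s _ _ adm N \<open>0 \<le> S\<close> D jet c] that \<open>0 < \<alpha>\<close> \<open>\<alpha> < \<eta>\<close> by simp
    show "\<forall>i. \<bar>(z - y)$i\<bar> \<le> sdist s y z ^ s i"
      using abs_component_le_sdist_power[of s _ z y] s by (simp add: sdist_sym)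
  qed (use assms sdist_pos sdist_nonneg in auto)
  also have "\<dots> \<le> real (card ?B) * (?A * T powr (\<eta> - \<alpha>) * sdist s y z powr \<alpha>)"
    using card_mono[OF finite_sdeg_le[OF s], of "?B - ?B\<^sub>\<alpha>"] \<open>0 \<le> ?A\<close>
    by (intro mult_right_mono) auto
  finally show ?thesis .
qed

text \<open>The three terms of \<open>U\<^sub>x - Q = U\<^sub>y + (U\<^sub>x - U\<^sub>y - P) + (P - Q)\<close> contribute
  \<open>N\<close>, \<open>S\<close> and at most \<open>2 |B| (N + S) grid_coeff_const\<close>, each at the scale \<open>3 R\<close>
  that bounds all distances involved.\<close>

definition holder_const :: "('n::finite \<Rightarrow> nat) \<Rightarrow> real \<Rightarrow> real \<Rightarrow> real" where
  "holder_const s \<eta> \<alpha> = 3 powr (\<eta> - \<alpha>)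
     * (1 + 2 * real (card {\<beta>. sdeg s \<beta> \<le> nat \<lfloor>\<eta>\<rfloor>}) * grid_coeff_const s \<eta> (nat \<lfloor>\<eta>\<rfloor>))"

lemma one_le_holder_const:
  assumes "\<alpha> \<le> \<eta>"
  shows "1 \<le> holder_const s \<eta> \<alpha>"
proof -
  have "1 \<le> 3 powr (\<eta> - \<alpha>)"
    using assms by (intro ge_one_powr_ge_zero) auto
  moreover have "1 \<le> 1 + 2 * real (card {\<beta>. sdeg s \<beta> \<le> nat \<lfloor>\<eta>\<rfloor>}) * grid_coeff_const s \<eta> (nat \<lfloor>\<eta>\<rfloor>)"
    using grid_coeff_const_nonneg[of s \<eta> "nat \<lfloor>\<eta>\<rfloor>"] by simp
  ultimately show ?thesis
    unfolding holder_const_def using mult_mono[of 1 _ 1] by fastforce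
qed

lemma taylor_truncation_estimate:
  fixes s :: "'n::finite \<Rightarrow> nat" and \<alpha> \<eta> :: real
  assumes s: "\<forall>i. 1 \<le> s i" and "0 < \<alpha>" "\<alpha> < \<eta>" and adm: "admissible_domain s D"
    and N: "germ_norm_bound s \<eta> D U N" "0 \<le> N" and "0 \<le> S"
    and D: "x \<in> D" "y \<in> D" "x \<noteq> y" and "sdist s x y < R"
    and P: "P \<in> spolys s (nat \<lfloor>\<eta>\<rfloor>)"
    and jet: "\<forall>z\<in>D. cmod (U x z - U y z - P z)
      \<le> S * sdist s y z powr \<alpha> * (sdist s x y + sdist s y z) powr (\<eta> - \<alpha>)"
  shows "\<exists>Q\<in>spolys s (nat \<lfloor>\<alpha>\<rfloor>). \<forall>z\<in>D. sdist s x z < R \<longrightarrow>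
    cmod (U x z - Q z) \<le> holder_const s \<eta> \<alpha> * (N + S) * R powr (\<eta> - \<alpha>) * sdist s z y powr \<alpha>"
proof -
  define B where "B = {\<beta>. sdeg s \<beta> \<le> nat \<lfloor>\<eta>\<rfloor>}"
  define B\<^sub>\<alpha> where "B\<^sub>\<alpha> = {\<beta>. sdeg s \<beta> \<le> nat \<lfloor>\<alpha>\<rfloor>}"
  define L where "L = grid_coeff_const s \<eta> (nat \<lfloor>\<eta>\<rfloor>)"
  have "finite B" "B\<^sub>\<alpha> \<subseteq> B" "0 \<le> L"
    using finite_sdeg_le[OF s] \<open>\<alpha> < \<eta>\<close> grid_coeff_const_nonneg
    unfolding B_def B\<^sub>\<alpha>_def L_def by (auto intro: order.trans[OF _ nat_mono[OF floor_mono]])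
  obtain c where c: "\<And>z. P z = (\<Sum>\<beta>\<in>B. c \<beta> * smonom \<beta> (z - y))"
    using spolys_expand_at[OF s P] unfolding B_def by blast
  define Q where "Q z = (\<Sum>\<beta>\<in>B\<^sub>\<alpha>. c \<beta> * smonom \<beta> (z - y))" for z
  show ?thesis
  proof (intro bexI[of _ Q] ballI impI)
    show "Q \<in> spolys s (nat \<lfloor>\<alpha>\<rfloor>)"
      unfolding Q_def B\<^sub>\<alpha>_def by (rule spolys_centered[OF s])
    fix z assume "z \<in> D" "sdist s x z < R"
    define \<delta> where "\<delta> = sdist s y z"
    define W where "W = (3 * R) powr (\<eta> - \<alpha>) * \<delta> powr \<alpha>"
    have "0 < sdist s x y"
      by (rule sdist_pos[OF D(3)])
    have "\<delta> \<le> 2 * R"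
      using sdist_triangle[OF s, of y z x] sdist_sym[of s y x] \<open>sdist s x z < R\<close> \<open>sdist s x y < R\<close>
      unfolding \<delta>_def by linarith
    have "cmod (U y z) \<le> N * W"
      using norm_germ_le_powr[OF N D(2) \<open>z \<in> D\<close>, of \<alpha> "3 * R"] \<open>0 < \<alpha>\<close> \<open>\<alpha> < \<eta>\<close> \<open>\<delta> \<le> 2 * R\<close>
        \<open>0 < sdist s x y\<close> \<open>sdist s x y < R\<close> unfolding W_def \<delta>_def by (simp add: mult.assoc)
    moreover have "cmod (U x z - U y z - P z) \<le> S * W"
    proof -
      have "cmod (U x z - U y z - P z) \<le> S * \<delta> powr \<alpha> * (sdist s x y + \<delta>) powr (\<eta> - \<alpha>)"
        using jet \<open>z \<in> D\<close> unfolding \<delta>_def by blast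
      also have "\<dots> \<le> S * \<delta> powr \<alpha> * (3 * R) powr (\<eta> - \<alpha>)"
        using \<open>0 \<le> S\<close> \<open>0 < sdist s x y\<close> \<open>sdist s x y < R\<close> \<open>\<delta> \<le> 2 * R\<close> \<open>\<alpha> < \<eta>\<close>
        by (intro mult_left_mono powr_mono2) (auto simp: \<delta>_def sdist_nonneg)
      finally show ?thesis
        by (simp add: W_def mult_ac)
    qed
    moreover have "cmod (P z - Q z) \<le> real (card B) * ((2 * N + S) * L * W)"
    proof -
      have "P z - Q z = (\<Sum>\<beta>\<in>B - B\<^sub>\<alpha>. c \<beta> * smonom \<beta> (z - y))"
        unfolding c Q_def sum.subset_diff[OF \<open>B\<^sub>\<alpha> \<subseteq> B\<close> \<open>finite B\<close>] by simp
      then show ?thesis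
        using norm_taylor_remainder_le[OF s \<open>0 < \<alpha>\<close> \<open>\<alpha> < \<eta>\<close> adm N \<open>0 \<le> S\<close> D jet c[unfolded B_def],
            of "3 * R" z] \<open>0 < sdist s x y\<close> \<open>sdist s x y < R\<close> \<open>\<delta> \<le> 2 * R\<close>
        by (simp add: B_def B\<^sub>\<alpha>_def L_def W_def \<delta>_def mult.assoc)
    qed
    moreover have "cmod (U x z - Q z) \<le> cmod (U y z) + cmod (U x z - U y z - P z) + cmod (P z - Q z)"
      using norm_triangle_ineq[of "U y z + (U x z - U y z - P z)" "P z - Q z"]
        norm_triangle_ineq[of "U y z" "U x z - U y z - P z"] by simp
    ultimately have "cmod (U x z - Q z) \<le> (N + S + real (card B) * (2 * N + S) * L) * W"
      by (simp add: algebra_simps)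
    also have "\<dots> \<le> (N + S) * (1 + 2 * real (card B) * L) * W"
      using \<open>0 \<le> L\<close> \<open>0 \<le> S\<close> by (intro mult_right_mono) (auto simp: W_def algebra_simps)
    also have "\<dots> = holder_const s \<eta> \<alpha> * (N + S) * R powr (\<eta> - \<alpha>) * sdist s z y powr \<alpha>"
      using \<open>0 < sdist s x y\<close> \<open>sdist s x y < R\<close>
      by (simp add: W_def \<delta>_def holder_const_def B_def L_def powr_mult sdist_sym[of s y z] mult_ac)
    finally show "cmod (U x z - Q z) \<le> holder_const s \<eta> \<alpha> * (N + S) * R powr (\<eta> - \<alpha>) * sdist s z y powr \<alpha>" .
  qed
qed

lemma holder_semi_bound_local:
  fixes s :: "'n::finite \<Rightarrow> nat" and \<alpha> \<eta> :: real
  assumes s: "\<forall>i. 1 \<le> s i" and "0 < \<alpha>" "\<alpha> < \<eta>" and adm: "admissible_domain s D"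
    and N: "germ_norm_bound s \<eta> D U N" "0 \<le> N" and S: "germ_semi_bound s \<eta> \<alpha> D U S" "0 \<le> S"
    and "x \<in> D"
  shows "holder_semi_bound s \<alpha> (U x) (D \<inter> sball s x R) (holder_const s \<eta> \<alpha> * (N + S) * R powr (\<eta> - \<alpha>))"
  unfolding holder_semi_bound_def
proof
  fix y assume "y \<in> D \<inter> sball s x R"
  then have "y \<in> D" "sdist s x y < R"
    by (auto simp: sball_def)
  show "\<exists>Q\<in>spolys s (nat \<lfloor>\<alpha>\<rfloor>). \<forall>z\<in>D \<inter> sball s x R.
    cmod (U x z - Q z) \<le> holder_const s \<eta> \<alpha> * (N + S) * R powr (\<eta> - \<alpha>) * sdist s z y powr \<alpha>"
  proof (cases "x = y")
    case True
    show ?thesis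
    proof (intro bexI[OF _ spolys_zero] ballI)
      fix z assume "z \<in> D \<inter> sball s x R"
      then have "cmod (U x z) \<le> N * R powr (\<eta> - \<alpha>) * sdist s x z powr \<alpha>"
        using norm_germ_le_powr[OF N \<open>x \<in> D\<close>] \<open>0 < \<alpha>\<close> \<open>\<alpha> < \<eta>\<close> by (auto simp: sball_def)
      also have "\<dots> \<le> holder_const s \<eta> \<alpha> * (N + S) * R powr (\<eta> - \<alpha>) * sdist s x z powr \<alpha>"
        using one_le_holder_const[of \<alpha> \<eta> s] \<open>\<alpha> < \<eta>\<close> N(2) S(2)
        by (intro mult_right_mono) (auto intro: order.trans[OF _ mult_mono[of 1 _ N]])
      finally show "cmod (U x z - 0) \<le> holder_const s \<eta> \<alpha> * (N + S) * R powr (\<eta> - \<alpha>) * sdist s z y powr \<alpha>"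
        using True by (simp add: sdist_sym)
    qed
  next
    case False
    obtain P where "P \<in> spolys s (nat \<lfloor>\<eta>\<rfloor>)" and "\<forall>z\<in>D. cmod (U x z - U y z - P z)
        \<le> S * sdist s y z powr \<alpha> * (sdist s x y + sdist s y z) powr (\<eta> - \<alpha>)"
      using S(1) \<open>x \<in> D\<close> \<open>y \<in> D\<close> unfolding germ_semi_bound_def by blast
    from taylor_truncation_estimate[OF s \<open>0 < \<alpha>\<close> \<open>\<alpha> < \<eta>\<close> adm N S(2) \<open>x \<in> D\<close> \<open>y \<in> D\<close> False
        \<open>sdist s x y < R\<close> this]
    show ?thesis
      by (auto simp: sball_def)
  qed
qed

lemma ereal_le_of_Inf_bounds:
  assumes a: "Inf {ereal M | M. M > 0 \<and> P M} = ereal a"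
    and b: "Inf {ereal M | M. M > 0 \<and> Q M} = ereal b"
    and "0 < C" and bound: "\<And>M M'. 0 < M \<Longrightarrow> P M \<Longrightarrow> 0 < M' \<Longrightarrow> Q M' \<Longrightarrow> X \<le> ereal (C * (M + M'))"
  shows "X \<le> ereal (C * (a + b))"
proof (rule ereal_le_epsilon2)
  fix e :: real assume "0 < e"
  then have "Inf {ereal M | M. M > 0 \<and> P M} < ereal (a + e / (2 * C))"
    "Inf {ereal M | M. M > 0 \<and> Q M} < ereal (b + e / (2 * C))"
    using a b \<open>0 < C\<close> by simp_all
  then obtain M M' where "0 < M" "P M" "M < a + e / (2 * C)" "0 < M'" "Q M'" "M' < b + e / (2 * C)"
    by (auto simp: Inf_less_iff)
  then have "X \<le> ereal (C * (M + M'))"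
    by (intro bound)
  also have "C * (M + M') \<le> C * (a + b) + e"
    using \<open>M < _\<close> \<open>M' < _\<close> \<open>0 < C\<close> mult_strict_left_mono[of "M + M'" _ C]
    by (simp add: field_simps)
  finally show "X \<le> ereal (C * (a + b)) + ereal e"
    by simp
qed

lemma holder_semi_le_germ_norms:
  fixes s :: "'n::finite \<Rightarrow> nat" and \<alpha> \<eta> :: real
  assumes s: "\<forall>i. 1 \<le> s i" and "0 < \<alpha>" "\<alpha> < \<eta>" and adm: "admissible_domain s D"
    and "x \<in> D" "0 < R"
    and a: "germ_norm s \<eta> D U = ereal a" and b: "germ_semi s \<eta> \<alpha> D U = ereal b"
  shows "holder_semi s \<alpha> (U x) (D \<inter> sball s x R) \<le> ereal (holder_const s \<eta> \<alpha> * R powr (\<eta> - \<alpha>) * (a + b))"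
proof (rule ereal_le_of_Inf_bounds[OF a[unfolded germ_norm_eq_Inf] b[unfolded germ_semi_eq_Inf]])
  show "0 < holder_const s \<eta> \<alpha> * R powr (\<eta> - \<alpha>)"
    using one_le_holder_const[of \<alpha> \<eta> s] \<open>\<alpha> < \<eta>\<close> \<open>0 < R\<close> by simp
  fix N S assume "0 < N" "germ_norm_bound s \<eta> D U N" "0 < S" "germ_semi_bound s \<eta> \<alpha> D U S"
  with holder_semi_bound_local[OF s \<open>0 < \<alpha>\<close> \<open>\<alpha> < \<eta>\<close> adm _ _ _ _ \<open>x \<in> D\<close>]
  have "holder_semi_bound s \<alpha> (U x) (D \<inter> sball s x R) (holder_const s \<eta> \<alpha> * (N + S) * R powr (\<eta> - \<alpha>))"
    by simp
  then show "holder_semi s \<alpha> (U x) (D \<inter> sball s x R) \<le> ereal (holder_const s \<eta> \<alpha> * R powr (\<eta> - \<alpha>) * (N + S))"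
    unfolding holder_semi_eq_Inf using one_le_holder_const[of \<alpha> \<eta> s] \<open>\<alpha> < \<eta>\<close> \<open>0 < N\<close> \<open>0 < S\<close> \<open>0 < R\<close>
    by (intro Inf_lower) (auto simp: mult_ac)
qed

theorem lemma3p4:
  fixes s :: "'n::finite \<Rightarrow> nat" and \<eta> \<alpha> :: real
  assumes "\<forall>i. 1 \<le> s i" and "0 < \<alpha>" and "\<alpha> < \<eta>" and "\<alpha> \<notin> \<nat>"
  shows "\<exists>C>0. \<forall>(D :: (real^'n) set) (U :: real^'n \<Rightarrow> real^'n \<Rightarrow> complex) (R :: real).
     admissible_domain s D \<and> germ D U \<and> germ_norm s \<eta> D U + germ_semi s \<eta> \<alpha> D U < \<infinity> \<and> R > 0
     \<longrightarrow> (SUP x\<in>D. holder_semi s \<alpha> (U x) (D \<inter> sball s x R))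
           \<le> ereal C * (germ_norm s \<eta> D U + germ_semi s \<eta> \<alpha> D U) * ereal (R powr (\<eta> - \<alpha>))"
proof (intro exI[of _ "holder_const s \<eta> \<alpha>"] conjI allI impI)
  show "0 < holder_const s \<eta> \<alpha>"
    using one_le_holder_const[of \<alpha> \<eta> s] \<open>\<alpha> < \<eta>\<close> by simp
  fix D U and R :: real
  assume "admissible_domain s D \<and> germ D U \<and> germ_norm s \<eta> D U + germ_semi s \<eta> \<alpha> D U < \<infinity> \<and> R > 0"
  then have adm: "admissible_domain s D" and fin: "germ_norm s \<eta> D U + germ_semi s \<eta> \<alpha> D U < \<infinity>"
    and "0 < R" by auto
  have "0 \<le> germ_norm s \<eta> D U" "0 \<le> germ_semi s \<eta> \<alpha> D U"
    unfolding germ_norm_def germ_semi_def by (auto intro: Inf_greatest)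
  then obtain a b where a: "germ_norm s \<eta> D U = ereal a" and b: "germ_semi s \<eta> \<alpha> D U = ereal b"
    using fin by (cases "germ_norm s \<eta> D U"; cases "germ_semi s \<eta> \<alpha> D U") auto
  show "(SUP x\<in>D. holder_semi s \<alpha> (U x) (D \<inter> sball s x R))
      \<le> ereal (holder_const s \<eta> \<alpha>) * (germ_norm s \<eta> D U + germ_semi s \<eta> \<alpha> D U) * ereal (R powr (\<eta> - \<alpha>))"
    using holder_semi_le_germ_norms[OF assms(1-3) adm _ \<open>0 < R\<close> a b]
    unfolding a b by (intro SUP_least) (simp add: mult_ac)
qed

end
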